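(* Let $H$ be a connected finite simple graph with $|V(H)|\geqslant 4$ that contains no chorded cycle and no Hamiltonian path. Let $P_1=u_1u_2\cdots u_p$ be a longest path in $H$, with $p\geqslant 3$, and let $P_2=v_1v_2\cdots v_q$ be a longest path in $H-V(P_1)$, with $q\geqslant 1$. Suppose $d_{P_1}(v_1)\leqslant d_{P_1}(v_q)$. Then at least one of the following holds: (1) $q\leqslant 2$ and $V(H)=V(P_1)\cup V(P_2)$; (2) $q\geqslant 3$ and $d_H(v_1)=1$; (3) there exists a vertex $w\in V(H)\setminus (V(P_1)\cup\{v_1\})$ such that $d_H(w)\leqslant 2$, $u_1w\notin E(H)$, $u_pw\notin E(H)$, and $w$ is not a cut-vertex of $H$.
   Context: A chord of a cycle $C$ is an edge of the graph not in $E(C)$ with both ends on $C$; a chorded cycle is a cycle with at least one chord. A path is written as its vertex sequence; "longest" means having the maximum number of vertices. $H-V(P_1)$ is the subgraph induced by $V(H)\setminus V(P_1)$. For a subgraph $K$ and a vertex $u$, $d_K(u)=|N(u)\cap V(K)|$ is the number of neighbours of $u$ lying in $V(K)$ (in particular $d_H(u)$ is the degree of $u$ in $H$). *)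

theory Defs
  imports Main
begin

definition simple_graph :: "'a set \<Rightarrow> ('a \<Rightarrow> 'a \<Rightarrow> bool) \<Rightarrow> bool" where
  "simple_graph V E \<longleftrightarrow> finite V \<and> (\<forall>x y. E x y \<longrightarrow> E y x) \<and> (\<forall>x. \<not> E x x)
     \<and> (\<forall>x y. E x y \<longrightarrow> x \<in> V \<and> y \<in> V)"

definition is_path :: "'a set \<Rightarrow> ('a \<Rightarrow> 'a \<Rightarrow> bool) \<Rightarrow> 'a list \<Rightarrow> bool" where
  "is_path S E xs \<longleftrightarrow> xs \<noteq> [] \<and> set xs \<subseteq> S \<and> distinct xs
     \<and> (\<forall>i. i + 1 < length xs \<longrightarrow> E (xs ! i) (xs ! (i + 1)))"

definition longest_path :: "'a set \<Rightarrow> ('a \<Rightarrow> 'a \<Rightarrow> bool) \<Rightarrow> 'a list \<Rightarrow> bool" where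
  "longest_path S E xs \<longleftrightarrow> is_path S E xs \<and> (\<forall>ys. is_path S E ys \<longrightarrow> length ys \<le> length xs)"

definition hamiltonian_path :: "'a set \<Rightarrow> ('a \<Rightarrow> 'a \<Rightarrow> bool) \<Rightarrow> 'a list \<Rightarrow> bool" where
  "hamiltonian_path V E xs \<longleftrightarrow> is_path V E xs \<and> set xs = V"

definition reachable_in :: "'a set \<Rightarrow> ('a \<Rightarrow> 'a \<Rightarrow> bool) \<Rightarrow> 'a \<Rightarrow> 'a \<Rightarrow> bool" where
  "reachable_in S E x y \<longleftrightarrow> (\<exists>xs. is_path S E xs \<and> hd xs = x \<and> last xs = y)"

definition connected_graph :: "'a set \<Rightarrow> ('a \<Rightarrow> 'a \<Rightarrow> bool) \<Rightarrow> bool" where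
  "connected_graph V E \<longleftrightarrow> V \<noteq> {} \<and> (\<forall>x\<in>V. \<forall>y\<in>V. reachable_in V E x y)"

definition is_cycle :: "'a set \<Rightarrow> ('a \<Rightarrow> 'a \<Rightarrow> bool) \<Rightarrow> 'a list \<Rightarrow> bool" where
  "is_cycle V E cs \<longleftrightarrow> length cs \<ge> 3 \<and> is_path V E cs \<and> E (last cs) (hd cs)"

definition cycle_edges :: "'a list \<Rightarrow> 'a set set" where
  "cycle_edges cs = {{cs ! i, cs ! (i + 1)} | i. i + 1 < length cs} \<union> {{last cs, hd cs}}"

definition is_chord :: "('a \<Rightarrow> 'a \<Rightarrow> bool) \<Rightarrow> 'a list \<Rightarrow> 'a \<Rightarrow> 'a \<Rightarrow> bool" where
  "is_chord E cs x y \<longleftrightarrow> E x y \<and> x \<in> set cs \<and> y \<in> set cs \<and> {x, y} \<notin> cycle_edges cs"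

definition has_chorded_cycle :: "'a set \<Rightarrow> ('a \<Rightarrow> 'a \<Rightarrow> bool) \<Rightarrow> bool" where
  "has_chorded_cycle V E \<longleftrightarrow> (\<exists>cs x y. is_cycle V E cs \<and> is_chord E cs x y)"

definition deg_in :: "('a \<Rightarrow> 'a \<Rightarrow> bool) \<Rightarrow> 'a set \<Rightarrow> 'a \<Rightarrow> nat" where
  "deg_in E K u = card {x \<in> K. E u x}"

text \<open>Cut vertex: removing w increases the number of components, i.e. some two
vertices other than w connected in H are no longer connected in H - w.\<close>
definition cut_vertex :: "'a set \<Rightarrow> ('a \<Rightarrow> 'a \<Rightarrow> bool) \<Rightarrow> 'a \<Rightarrow> bool" where
  "cut_vertex V E w \<longleftrightarrow> w \<in> V \<and> (\<exists>x\<in>V - {w}. \<exists>y\<in>V - {w}.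
      reachable_in V E x y \<and> \<not> reachable_in (V - {w}) E x y)"

end

theory Submission
  imports Defs
begin

text \<open>
  A vertex off a path has at most two neighbours on it, since a third one would give a
  chorded cycle. Hence a vertex w outside P1 from which some path runs through all of its
  neighbours (has_neighbourhood_path w) has degree at most 2; it is not a cut vertex, as
  its neighbours lie on one path avoiding w; and, P1 being longest, it is not adjacent to
  an end of P1. So it suffices to find such a vertex in H - V(P1), other than v1, unless
  (1) or (2) holds.

  The main tool: if a path Z in H - V(P1) contains all neighbours in H - V(P1) of both of
  its ends, then one of its ends has a neighbourhood path. An end without neighbours on P1
  uses Z itself, an end with one neighbour on P1 uses Z followed by a segment of P1 that
  starts at a neighbour of the other end; and the two ends cannot both have two neighbours
  on P1, because the neighbours on P1 of one end of Z lie strictly between those of the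
  other end (attachments_straddle). This applies to a longest path of any component of
  H - V(P1), which settles q \<le> 2, and to P2 and its rotations. For q \<ge> 3 the only
  remaining case is that v1 is adjacent to some u_i and vq to two vertices u_j, u_l of P1,
  with j < i < l. Then either v2 has a neighbour outside P1 and P2, and rotating P2 at v2
  gives a longest path to which the main tool applies, or v2 has the neighbourhood path
  v2 v3 ... vq u_j ... u_i v1.
\<close>

lemma is_path_iff_successively:
  "is_path S E xs \<longleftrightarrow> xs \<noteq> [] \<and> set xs \<subseteq> S \<and> distinct xs \<and> successively E xs"
  unfolding is_path_def successively_conv_nth by auto

lemma is_path_nonempty: "is_path S E xs \<Longrightarrow> xs \<noteq> []"
  by (simp add: is_path_def)

lemma is_path_subset: "is_path S E xs \<Longrightarrow> set xs \<subseteq> S"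
  by (simp add: is_path_def)

lemma is_path_hd_last_mem: "is_path S E xs \<Longrightarrow> hd xs \<in> S \<and> last xs \<in> S"
  by (auto simp: is_path_def)

lemma is_path_singleton [simp]: "is_path S E [x] \<longleftrightarrow> x \<in> S"
  by (simp add: is_path_iff_successively)

lemma is_path_Cons:
  "is_path S E (x # xs) \<longleftrightarrow> x \<in> S \<and> x \<notin> set xs \<and> (xs = [] \<or> is_path S E xs \<and> E x (hd xs))"
  by (auto simp: is_path_iff_successively successively_Cons)

lemma is_path_append:
  "xs \<noteq> [] \<Longrightarrow> ys \<noteq> [] \<Longrightarrow> is_path S E (xs @ ys) \<longleftrightarrow>
     is_path S E xs \<and> is_path S E ys \<and> set xs \<inter> set ys = {} \<and> E (last xs) (hd ys)"
  by (auto simp: is_path_iff_successively successively_append_iff)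

lemma is_path_rev: "symp E \<Longrightarrow> is_path S E (rev xs) \<longleftrightarrow> is_path S E xs"
  by (auto simp: is_path_iff_successively intro: successively_mono dest: sympD)

lemma is_path_mono: "is_path S E xs \<Longrightarrow> S \<subseteq> T \<Longrightarrow> is_path T E xs"
  by (auto simp: is_path_def)

lemma is_path_take: "is_path S E xs \<Longrightarrow> 0 < n \<Longrightarrow> is_path S E (take n xs)"
  using successively_append_iff[of E "take n xs" "drop n xs"]
  by (auto simp: is_path_iff_successively dest: in_set_takeD)

lemma is_path_drop: "is_path S E xs \<Longrightarrow> n < length xs \<Longrightarrow> is_path S E (drop n xs)"
  using successively_append_iff[of E "take n xs" "drop n xs"]
  by (auto simp: is_path_iff_successively dest: in_set_dropD)

lemma is_path_tl: "is_path S E xs \<Longrightarrow> 2 \<le> length xs \<Longrightarrow> is_path S E (tl xs)"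
  using is_path_drop[of S E xs 1] by (simp add: drop_Suc)

lemma is_path_rotation:
  assumes "is_path S E P" "symp E" "0 < k" "k < length P" "E (hd P) (P ! k)"
  shows "is_path S E (rev (take k P) @ drop k P)"
proof (subst is_path_append)
  show "rev (take k P) \<noteq> []" "drop k P \<noteq> []" using assms(3,4) by auto
  have "is_path S E (take k P)" "is_path S E (drop k P)"
    using assms by (simp_all add: is_path_take is_path_drop)
  moreover have "set (take k P) \<inter> set (drop k P) = {}"
    using assms(1) set_take_disj_set_drop_if_distinct[of P k k] by (simp add: is_path_def)
  ultimately show "is_path S E (rev (take k P)) \<and> is_path S E (drop k P) \<and>
      set (rev (take k P)) \<inter> set (drop k P) = {} \<and> E (last (rev (take k P))) (hd (drop k P))"
    using assms by (simp add: is_path_rev last_rev hd_drop_conv_nth)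
qed

definition subpath :: "'a list \<Rightarrow> nat \<Rightarrow> nat \<Rightarrow> 'a list" where
  "subpath L a b =
     (if a \<le> b then take (b - a + 1) (drop a L) else rev (take (a - b + 1) (drop b L)))"

lemma
  assumes "a < length L" "b < length L"
  shows hd_subpath: "hd (subpath L a b) = L ! a"
    and last_subpath: "last (subpath L a b) = L ! b"
    and set_subpath: "set (subpath L a b) = {L ! t | t. min a b \<le> t \<and> t \<le> max a b}"
    and length_subpath: "length (subpath L a b) = max a b - min a b + 1"
proof -
  have "take (y - x + 1) (drop x L) = map ((!) L) [x..<Suc y]" if "x \<le> y" "y < length L" for x y
    using that by (intro nth_equalityI) (auto simp del: upt_Suc)
  then have eq: "subpath L a b =
      (if a \<le> b then map ((!) L) [a..<Suc b] else rev (map ((!) L) [b..<Suc a]))"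
    using assms unfolding subpath_def by auto
  show "hd (subpath L a b) = L ! a" "last (subpath L a b) = L ! b"
    unfolding eq by (auto simp del: upt_Suc simp: hd_map last_map hd_rev last_rev)
  show "set (subpath L a b) = {L ! t | t. min a b \<le> t \<and> t \<le> max a b}"
    unfolding eq by (auto simp del: upt_Suc)
  show "length (subpath L a b) = max a b - min a b + 1"
    unfolding eq by auto
qed

lemma nth_mem_subpath:
  "a < length L \<Longrightarrow> b < length L \<Longrightarrow> min a b \<le> t \<Longrightarrow> t \<le> max a b \<Longrightarrow> L ! t \<in> set (subpath L a b)"
  by (auto simp: set_subpath)

lemma set_subpath_subset: "a < length L \<Longrightarrow> b < length L \<Longrightarrow> set (subpath L a b) \<subseteq> set L"
  by (auto simp: set_subpath)

lemma is_path_subpath: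
  assumes "is_path S E L" "symp E" "a < length L" "b < length L"
  shows "is_path S E (subpath L a b)"
proof -
  have "is_path S E (take (y - x + 1) (drop x L))" if "x \<le> y" "y < length L" for x y
    using assms(1) that by (intro is_path_take is_path_drop) auto
  then show ?thesis
    using assms by (simp add: subpath_def is_path_rev)
qed

definition induced_edge :: "'a set \<Rightarrow> ('a \<Rightarrow> 'a \<Rightarrow> bool) \<Rightarrow> 'a \<Rightarrow> 'a \<Rightarrow> bool" where
  "induced_edge S E x y \<longleftrightarrow> E x y \<and> x \<in> S \<and> y \<in> S"

lemma rtranclp_induced_edge_if_is_path:
  "is_path S E xs \<Longrightarrow> y \<in> set xs \<Longrightarrow> (induced_edge S E)\<^sup>*\<^sup>* (hd xs) y"
proof (induction xs)
  case Nil
  then show ?case by simp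
next
  case (Cons x xs)
  show ?case
  proof (cases "y = x")
    case False
    then have "is_path S E xs" "y \<in> set xs" "induced_edge S E x (hd xs)"
      using Cons.prems by (auto simp: is_path_Cons induced_edge_def dest: is_path_hd_last_mem)
    then show ?thesis
      using Cons.IH by (simp add: converse_rtranclp_into_rtranclp)
  qed simp
qed

lemma reachable_in_if_rtranclp_induced_edge:
  "(induced_edge S E)\<^sup>*\<^sup>* x y \<Longrightarrow> x \<in> S \<Longrightarrow> reachable_in S E x y"
proof (induction rule: rtranclp_induct)
  case base
  then show ?case unfolding reachable_in_def by (auto intro!: exI[of _ "[x]"])
next
  case (step y z)
  then obtain xs where xs: "is_path S E xs" "hd xs = x" "last xs = y"
    unfolding reachable_in_def by blast
  show ?case
  proof (cases "z \<in> set xs")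
    case True
    then obtain k where k: "k < length xs" "xs ! k = z" by (auto simp: in_set_conv_nth)
    have "is_path S E (take (Suc k) xs)" using xs(1) by (simp add: is_path_take)
    moreover have "hd (take (Suc k) xs) = x" using xs(2) by simp
    moreover have "last (take (Suc k) xs) = z" using k by (simp add: take_Suc_conv_app_nth)
    ultimately show ?thesis unfolding reachable_in_def by blast
  next
    case False
    with xs step.hyps(2) have "is_path S E (xs @ [z])"
      by (subst is_path_append) (auto simp: induced_edge_def dest: is_path_nonempty)
    then show ?thesis
      using xs is_path_nonempty[OF xs(1)] unfolding reachable_in_def
      by (intro exI[of _ "xs @ [z]"]) auto
  qed
qed

lemma reachable_in_iff_rtranclp:
  "reachable_in S E x y \<longleftrightarrow> x \<in> S \<and> (induced_edge S E)\<^sup>*\<^sup>* x y"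
proof
  assume "reachable_in S E x y"
  then obtain xs where "is_path S E xs" "hd xs = x" "last xs = y"
    unfolding reachable_in_def by blast
  then show "x \<in> S \<and> (induced_edge S E)\<^sup>*\<^sup>* x y"
    using rtranclp_induced_edge_if_is_path[of S E xs y] is_path_hd_last_mem[of S E xs]
      is_path_nonempty[of S E xs] by auto
qed (simp add: reachable_in_if_rtranclp_induced_edge)

lemma reachable_in_path: "is_path S E xs \<Longrightarrow> y \<in> set xs \<Longrightarrow> reachable_in S E (hd xs) y"
  by (simp add: reachable_in_iff_rtranclp rtranclp_induced_edge_if_is_path is_path_hd_last_mem)

lemma reachable_in_mem: "reachable_in S E x y \<Longrightarrow> x \<in> S \<and> y \<in> S"
  by (auto simp: reachable_in_def dest: is_path_hd_last_mem)

lemma reachable_in_trans: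
  "reachable_in S E x y \<Longrightarrow> reachable_in S E y z \<Longrightarrow> reachable_in S E x z"
  by (auto simp: reachable_in_iff_rtranclp)

lemma reachable_in_sym: "symp E \<Longrightarrow> reachable_in S E x y \<Longrightarrow> reachable_in S E y x"
proof -
  assume E: "symp E" and xy: "reachable_in S E x y"
  from E have "symp (induced_edge S E)"
    by (auto simp: induced_edge_def symp_def)
  moreover have "(induced_edge S E)\<^sup>*\<^sup>* x y" "y \<in> S"
    using xy reachable_in_mem[OF xy] by (auto simp: reachable_in_iff_rtranclp)
  ultimately show ?thesis
    by (simp add: reachable_in_iff_rtranclp sympD[OF symp_rtranclp])
qed

lemma reachable_in_step:
  "reachable_in S E x y \<Longrightarrow> E y z \<Longrightarrow> z \<in> S \<Longrightarrow> reachable_in S E x z"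
proof (cases "y = z")
  case False
  assume "reachable_in S E x y" "E y z" "z \<in> S"
  moreover from this have "is_path S E [y, z]"
    using False reachable_in_mem[of S E x y] by (simp add: is_path_Cons)
  ultimately show ?thesis
    using reachable_in_path[of S E "[y, z]" z] reachable_in_trans[of S E x y z] by simp
qed simp

lemma reachable_in_last_step:
  assumes "reachable_in S E z w" "z \<noteq> w"
  shows "\<exists>y. E y w \<and> reachable_in (S - {w}) E z y"
proof -
  obtain xs where xs: "is_path S E xs" "hd xs = z" "last xs = w"
    using assms(1) unfolding reachable_in_def by blast
  have len: "2 \<le> length xs"
    using xs assms(2) is_path_nonempty[OF xs(1)] by (cases xs) (auto simp: Suc_le_eq)
  define ys where "ys = butlast xs"
  have xs_eq: "xs = ys @ [w]" and ys: "ys \<noteq> []"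
    using xs(3) len is_path_nonempty[OF xs(1)] unfolding ys_def by (auto simp flip: length_0_conv)
  have "w \<notin> set ys" "E (last ys) w" "is_path S E ys"
    using xs(1) ys unfolding xs_eq by (auto simp: is_path_append)
  then have "is_path (S - {w}) E ys" "E (last ys) w"
    by (auto simp: is_path_def)
  moreover have "hd ys = z" using xs(2) ys unfolding xs_eq by simp
  ultimately show ?thesis using reachable_in_path ys by fastforce
qed

lemma reachable_in_closed:
  assumes "reachable_in S E x y" "x \<in> C" "\<And>a b. a \<in> C \<Longrightarrow> b \<in> S \<Longrightarrow> E a b \<Longrightarrow> b \<in> C"
  shows "y \<in> C"
proof -
  have "(induced_edge S E)\<^sup>*\<^sup>* x y" using assms(1) by (simp add: reachable_in_iff_rtranclp)
  then show ?thesis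
    by (induction rule: rtranclp_induct) (use assms(2,3) in \<open>auto simp: induced_edge_def\<close>)
qed

lemma length_le_card_if_is_path: "finite S \<Longrightarrow> is_path S E xs \<Longrightarrow> length xs \<le> card S"
  by (metis card_mono distinct_card is_path_def)

lemma ex_longest_path: "finite S \<Longrightarrow> x \<in> S \<Longrightarrow> \<exists>P. longest_path S E P"
  using ex_has_greatest_nat[of "is_path S E" "[x]" length "card S + 1"]
    length_le_card_if_is_path[of S E]
  unfolding longest_path_def by (simp add: less_Suc_eq_le)

lemma longest_path_hd_closed:
  assumes "longest_path S E P" "y \<in> S" "E y (hd P)"
  shows "y \<in> set P"
proof (rule ccontr)
  assume "y \<notin> set P"
  with assms have "is_path S E (y # P)"
    by (simp add: longest_path_def is_path_Cons)
  then show False using assms(1) by (fastforce simp: longest_path_def)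
qed

lemma longest_path_last_closed:
  assumes "longest_path S E P" "y \<in> S" "E (last P) y"
  shows "y \<in> set P"
proof (rule ccontr)
  assume "y \<notin> set P"
  with assms is_path_nonempty have "is_path S E (P @ [y])"
    by (subst is_path_append) (auto simp: longest_path_def)
  then show False using assms(1) by (fastforce simp: longest_path_def)
qed

lemma longest_path_same_length:
  "longest_path S E P \<Longrightarrow> is_path S E Q \<Longrightarrow> length Q = length P \<Longrightarrow> longest_path S E Q"
  by (simp add: longest_path_def)

section \<open>Graphs without chorded cycles\<close>

lemma cycle_edges_Cons_through_hd:
  assumes "x \<notin> set T" "T \<noteq> []" "{x, y} \<in> cycle_edges (x # T)"
  shows "y = hd T \<or> y = last T"
proof -
  consider i where "{x, y} = {(x # T) ! i, (x # T) ! Suc i}" "Suc i < length (x # T)"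
    | "{x, y} = {last (x # T), x}"
    using assms(3) unfolding cycle_edges_def by auto
  then show ?thesis
  proof cases
    case (1 i)
    show ?thesis
    proof (cases i)
      case (Suc k)
      with 1 have "x \<in> set T" by (auto simp: doubleton_eq_iff)
      with assms(1) show ?thesis ..
    qed (use 1 assms(2) in \<open>auto simp: doubleton_eq_iff hd_conv_nth\<close>)
  qed (use assms(2) in \<open>auto simp: doubleton_eq_iff\<close>)
qed

locale chordless_graph =
  fixes V :: "'a set" and E :: "'a \<Rightarrow> 'a \<Rightarrow> bool"
  assumes simple: "simple_graph V E" and no_chorded_cycle: "\<not> has_chorded_cycle V E"
begin

lemma edge_sym: "E x y \<Longrightarrow> E y x"
  using simple by (simp add: simple_graph_def)

lemma symp_edge: "symp E"
  by (simp add: edge_sym sympI)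

lemma edge_irrefl: "\<not> E x x"
  using simple by (simp add: simple_graph_def)

lemma edge_mem: "E x y \<Longrightarrow> x \<in> V \<and> y \<in> V"
  using simple by (simp add: simple_graph_def)

lemma finite_vertices: "finite V"
  using simple by (simp add: simple_graph_def)

lemma no_three_ordered_neighbours_on_path:
  assumes L: "is_path V E L" and x: "x \<in> V" "x \<notin> set L"
    and abc: "a < b" "b < c" "c < length L"
    and adj: "E x (L ! a)" "E x (L ! b)" "E x (L ! c)"
  shows False
proof -
  define T where "T = subpath L a c"
  have T: "is_path V E T" "hd T = L ! a" "last T = L ! c" "set T = {L ! t | t. a \<le> t \<and> t \<le> c}"
    using abc is_path_subpath[OF L symp_edge, of a c] hd_subpath[of a L c] last_subpath[of a L c]
      set_subpath[of a L c]
    unfolding T_def by auto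
  have "2 \<le> length T" using abc length_subpath[of a L c] unfolding T_def by auto
  have "set T \<subseteq> set L" using T(4) abc by auto
  then have "is_cycle V E (x # T)"
    using T x adj abc edge_sym is_path_nonempty[OF T(1)] \<open>2 \<le> length T\<close>
    by (auto simp: is_cycle_def is_path_Cons)
  moreover have "L ! b \<in> set T" using T(4) abc by auto
  moreover have "L ! b \<noteq> L ! a" "L ! b \<noteq> L ! c"
    using L abc by (auto simp: is_path_def nth_eq_iff_index_eq)
  then have "{x, L ! b} \<notin> cycle_edges (x # T)"
    using cycle_edges_Cons_through_hd[of x T "L ! b"] T x \<open>set T \<subseteq> set L\<close> is_path_nonempty[OF T(1)]
    by auto
  ultimately show False
    using no_chorded_cycle adj(2) unfolding has_chorded_cycle_def is_chord_def by auto
qed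

lemma no_three_neighbours_on_path:
  assumes L: "is_path V E L" and x: "x \<in> V" "x \<notin> set L"
    and y: "y1 \<in> set L" "y2 \<in> set L" "y3 \<in> set L" "distinct [y1, y2, y3]"
    and adj: "E x y1" "E x y2" "E x y3"
  shows False
proof -
  obtain i1 i2 i3 where i: "i1 < length L" "i2 < length L" "i3 < length L"
    "L ! i1 = y1" "L ! i2 = y2" "L ! i3 = y3"
    using y by (auto simp: in_set_conv_nth)
  have ordered: False if "a < b" "b < c" "c < length L" "{a, b, c} = {i1, i2, i3}" for a b c
  proof -
    have "E x (L ! a)" "E x (L ! b)" "E x (L ! c)"
      using that(4) i adj by (auto simp: insert_eq_iff doubleton_eq_iff)
    with no_three_ordered_neighbours_on_path[OF L x that(1-3)] show False by blast
  qed
  have "i1 \<noteq> i2" "i1 \<noteq> i3" "i2 \<noteq> i3" using i y by auto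
  then show False
    using i(1-3) ordered[of i1 i2 i3] ordered[of i1 i3 i2] ordered[of i2 i1 i3]
      ordered[of i2 i3 i1] ordered[of i3 i1 i2] ordered[of i3 i2 i1]
    by (metis insert_commute linorder_neqE_nat)
qed

lemma card_neighbours_on_path_le_2:
  assumes "is_path V E L" "x \<in> V" "x \<notin> set L"
  shows "card {y \<in> set L. E x y} \<le> 2"
proof (rule ccontr)
  assume "\<not> ?thesis"
  then obtain T where "T \<subseteq> {y \<in> set L. E x y}" "card T = 3"
    using obtain_subset_with_card_n[of 3 "{y \<in> set L. E x y}"] by auto
  then obtain y1 y2 y3 where "{y1, y2, y3} \<subseteq> {y \<in> set L. E x y}" "distinct [y1, y2, y3]"
    by (auto simp: card_3_iff)
  then show False using no_three_neighbours_on_path[OF assms] by auto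
qed

definition has_neighbourhood_path :: "'a \<Rightarrow> bool" where
  "has_neighbourhood_path w \<longleftrightarrow> (\<exists>R. is_path V E R \<and> hd R = w \<and> (\<forall>y. E w y \<longrightarrow> y \<in> set R))"

lemma neighbourhood_path_tl:
  assumes "is_path V E R" "hd R = w"
  shows "R = w # tl R" "w \<notin> set (tl R)" "tl R \<noteq> [] \<Longrightarrow> is_path (V - {w}) E (tl R)"
    and "\<forall>y. E w y \<longrightarrow> y \<in> set R \<Longrightarrow> E w y \<Longrightarrow> y \<in> set (tl R)"
proof -
  show R: "R = w # tl R" using assms is_path_nonempty by (cases R) auto
  then show "w \<notin> set (tl R)" using assms(1) by (metis distinct.simps(2) is_path_def)
  then show "tl R \<noteq> [] \<Longrightarrow> is_path (V - {w}) E (tl R)"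
    using assms(1) R by (metis is_path_Cons is_path_def Diff_empty subset_Diff_insert)
  show "y \<in> set (tl R)" if "\<forall>y. E w y \<longrightarrow> y \<in> set R" "E w y"
    using that R edge_irrefl by (metis set_ConsD)
qed

lemma deg_le_2_if_has_neighbourhood_path:
  assumes "has_neighbourhood_path w" "w \<in> V"
  shows "deg_in E V w \<le> 2"
proof -
  obtain R where R: "is_path V E R" "hd R = w" "\<forall>y. E w y \<longrightarrow> y \<in> set R"
    using assms(1) unfolding has_neighbourhood_path_def by blast
  note tl = neighbourhood_path_tl[OF R(1,2)]
  have "card {x \<in> V. E w x} \<le> card {y \<in> set (tl R). E w y}"
    using tl(4)[OF R(3)] by (intro card_mono) auto
  moreover have "card {y \<in> set (tl R). E w y} \<le> 2"
  proof (cases "tl R = []")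
    case False
    then have "is_path V E (tl R)" using tl(3) is_path_mono by blast
    then show ?thesis using card_neighbours_on_path_le_2 tl(2) assms(2) by blast
  qed simp
  ultimately show ?thesis
    unfolding deg_in_def by linarith
qed

lemma not_cut_vertex_if_has_neighbourhood_path:
  assumes con: "connected_graph V E" and w: "has_neighbourhood_path w"
  shows "\<not> cut_vertex V E w"
proof
  assume "cut_vertex V E w"
  then obtain x y where xy: "x \<in> V - {w}" "y \<in> V - {w}" "\<not> reachable_in (V - {w}) E x y"
    unfolding cut_vertex_def by blast
  obtain R where R: "is_path V E R" "hd R = w" "\<forall>y. E w y \<longrightarrow> y \<in> set R"
    using w unfolding has_neighbourhood_path_def by blast
  note tl = neighbourhood_path_tl[OF R(1,2)]
  have reaches_tl: "\<exists>t \<in> set (tl R). reachable_in (V - {w}) E z t" if z: "z \<in> V - {w}" for z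
  proof -
    have "reachable_in V E z w"
      using con z is_path_hd_last_mem[OF R(1)] R(2) unfolding connected_graph_def by blast
    then obtain t where "E t w" "reachable_in (V - {w}) E z t"
      using reachable_in_last_step[of V E z w] z by blast
    moreover from this have "t \<in> set (tl R)"
      using tl(4)[OF R(3)] edge_sym by blast
    ultimately show ?thesis by blast
  qed
  obtain t1 t2 where t: "t1 \<in> set (tl R)" "t2 \<in> set (tl R)"
    "reachable_in (V - {w}) E x t1" "reachable_in (V - {w}) E y t2"
    using reaches_tl xy(1,2) by blast
  then have "tl R \<noteq> []" by auto
  then have "reachable_in (V - {w}) E (hd (tl R)) t" if "t \<in> set (tl R)" for t
    using reachable_in_path[OF tl(3)] that by blast
  then have "reachable_in (V - {w}) E t1 (hd (tl R))" "reachable_in (V - {w}) E (hd (tl R)) t2"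
    "reachable_in (V - {w}) E t2 y"
    using t reachable_in_sym[OF symp_edge] by auto
  then have "reachable_in (V - {w}) E x y"
    using t(3) reachable_in_trans by metis
  with xy(3) show False ..
qed

end

section \<open>Neighbourhood paths outside a longest path\<close>

locale chordless_longest_path = chordless_graph +
  fixes P1 :: "'a list"
  assumes longest_P1: "longest_path V E P1"
begin

abbreviation outside :: "'a set" where "outside \<equiv> V - set P1"

definition attachments :: "'a \<Rightarrow> 'a set" where
  "attachments x = {y \<in> set P1. E x y}"

lemma is_path_P1: "is_path V E P1"
  using longest_P1 by (simp add: longest_path_def)

lemma distinct_P1: "distinct P1"
  using is_path_P1 by (simp add: is_path_def)

lemma is_path_outside: "is_path outside E Z \<Longrightarrow> is_path V E Z"
  by (auto intro: is_path_mono)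

lemma subpath_P1:
  assumes "a < length P1" "b < length P1"
  shows "is_path V E (subpath P1 a b)" "set (subpath P1 a b) \<subseteq> set P1"
    "hd (subpath P1 a b) = P1 ! a" "last (subpath P1 a b) = P1 ! b"
    "min a b \<le> t \<Longrightarrow> t \<le> max a b \<Longrightarrow> P1 ! t \<in> set (subpath P1 a b)"
  using is_path_subpath[OF is_path_P1 symp_edge assms] hd_subpath[OF assms] last_subpath[OF assms]
    set_subpath_subset[OF assms] nth_mem_subpath[OF assms] by auto

lemma attachments_cases:
  assumes "x \<in> outside"
  obtains "attachments x = {}"
  | a where "a < length P1" "attachments x = {P1 ! a}"
  | j l where "j < l" "l < length P1" "attachments x = {P1 ! j, P1 ! l}"
proof -
  have "card (attachments x) \<le> 2"
    using card_neighbours_on_path_le_2[OF is_path_P1] assms unfolding attachments_def by auto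
  then consider "attachments x = {}" | y where "attachments x = {y}"
    | y z where "attachments x = {y, z}" "y \<noteq> z"
    by (auto simp: le_Suc_eq numeral_2_eq_2 card_1_singleton_iff card_Suc_eq attachments_def)
  then show ?thesis
  proof cases
    case (2 y)
    then have "y \<in> set P1" by (auto simp: attachments_def)
    then show ?thesis
      using that(2) 2 by (metis in_set_conv_nth)
  next
    case (3 y z)
    then have "y \<in> set P1" "z \<in> set P1" by (auto simp: attachments_def)
    then obtain a b where "a < length P1" "b < length P1" "P1 ! a = y" "P1 ! b = z"
      by (metis in_set_conv_nth)
    then show ?thesis
      using that(3) 3 by (metis insert_commute linorder_neqE_nat)
  qed (use that(1) in blast)
qed

lemma no_two_attachments_of_far_end_on_subpath:
  assumes ie: "i < length P1" "e < length P1"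
    and Z: "is_path outside E Z" "2 \<le> length Z" "E (hd Z) (P1 ! i)"
    and y: "y1 \<in> set (subpath P1 e i)" "y2 \<in> set (subpath P1 e i)" "y1 \<noteq> y2"
    and adj: "E (last Z) y1" "E (last Z) y2"
  shows False
proof -
  define A where "A = subpath P1 e i"
  have A: "is_path V E A" "set A \<subseteq> set P1" "last A = P1 ! i"
    using subpath_P1[OF ie(2,1)] unfolding A_def by auto
  define B where "B = butlast Z"
  have Z_eq: "Z = B @ [last Z]" and B: "B \<noteq> []"
    using Z(2) unfolding B_def by (auto simp flip: length_0_conv)
  have B_path: "is_path outside E B" and "last Z \<notin> set B" "last Z \<in> outside"
    and B_last: "E (last B) (last Z)"
    using Z(1) B by (subst (asm) Z_eq, subst (asm) is_path_append; auto)+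
  moreover have "last B \<in> outside" using is_path_hd_last_mem[OF B_path] by blast
  moreover have "hd B = hd Z" using B by (subst Z_eq) simp
  \<comment> \<open>last Z has the three neighbours y1, y2 and last B on the path A @ B\<close>
  ultimately have "is_path V E (A @ B)" "last Z \<notin> set (A @ B)" "last Z \<in> V"
    "last B \<in> set (A @ B)" "last B \<notin> set P1"
    using A B Z(3) edge_sym is_path_nonempty[OF A(1)] is_path_subset[OF B_path]
    by (auto simp: is_path_append is_path_outside)
  then show False
    using no_three_neighbours_on_path[of "A @ B" "last Z" y1 y2 "last B"] y adj A(2)
      edge_sym[OF B_last]
    unfolding A_def by auto
qed

lemma attachments_straddle:
  assumes Z: "is_path outside E Z" "2 \<le> length Z" and i: "i < length P1" "E (hd Z) (P1 ! i)"
    and jl: "j < l" "l < length P1" "E (last Z) (P1 ! j)" "E (last Z) (P1 ! l)"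
  shows "j < i \<and> i < l"
proof -
  have "P1 ! j \<noteq> P1 ! l"
    using jl distinct_P1 by (simp add: nth_eq_iff_index_eq)
  then have False if "e < length P1" "min e i \<le> j" "max e i \<ge> l" for e
    using no_two_attachments_of_far_end_on_subpath[OF i(1) that(1) Z i(2), of "P1 ! j" "P1 ! l"]
      subpath_P1(5)[of e i]
      that i(1) jl by auto
  from this[of 0] this[of "length P1 - 1"] show ?thesis
    using jl by fastforce
qed

lemma neighbour_cases: "E x y \<Longrightarrow> y \<in> outside \<or> y \<in> attachments x"
  using edge_mem by (auto simp: attachments_def)

lemma has_neighbourhood_path_last_unattached:
  assumes Z: "is_path outside E Z" and closed: "\<forall>y\<in>outside. E (last Z) y \<longrightarrow> y \<in> set Z"
    and "attachments (last Z) = {}"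
  shows "has_neighbourhood_path (last Z)"
  unfolding has_neighbourhood_path_def
proof (intro exI conjI)
  show "is_path V E (rev Z)" using is_path_outside[OF Z] by (simp add: is_path_rev symp_edge)
  show "\<forall>y. E (last Z) y \<longrightarrow> y \<in> set (rev Z)"
    using closed assms(3) neighbour_cases by auto
qed (simp add: hd_rev)

lemma has_neighbourhood_path_last_via_P1:
  assumes Z: "is_path outside E Z" and closed: "\<forall>y\<in>outside. E (last Z) y \<longrightarrow> y \<in> set Z"
    and ic: "i < length P1" "c < length P1" "E (hd Z) (P1 ! i)"
    and att: "attachments (last Z) \<subseteq> set (subpath P1 i c)"
  shows "has_neighbourhood_path (last Z)"
  unfolding has_neighbourhood_path_def
proof (intro exI conjI)
  have "set Z \<subseteq> outside" using is_path_subset[OF Z] .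
  then show "is_path V E (rev Z @ subpath P1 i c)"
    using is_path_outside[OF Z] is_path_nonempty[OF Z] subpath_P1[OF ic(1,2)] ic(3)
      is_path_nonempty[OF subpath_P1(1)[OF ic(1,2)]]
    by (subst is_path_append) (auto simp: is_path_rev symp_edge last_rev)
  show "hd (rev Z @ subpath P1 i c) = last Z"
    using is_path_nonempty[OF Z] by (simp add: hd_rev)
  show "\<forall>y. E (last Z) y \<longrightarrow> y \<in> set (rev Z @ subpath P1 i c)"
    using closed att neighbour_cases by auto
qed

lemma not_two_attachments_at_both_ends:
  assumes Z: "is_path outside E Z" "2 \<le> length Z"
    and hd_att: "i < i'" "i' < length P1" "attachments (hd Z) = {P1 ! i, P1 ! i'}"
    and last_att: "j < l" "l < length P1" "attachments (last Z) = {P1 ! j, P1 ! l}"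
  shows False
proof -
  have "j < i"
    using attachments_straddle[OF Z, of i j l] hd_att last_att by (auto simp: attachments_def)
  moreover have "i < j"
  proof -
    have "is_path outside E (rev Z)" "2 \<le> length (rev Z)"
      using Z by (simp_all add: is_path_rev symp_edge)
    moreover have "hd (rev Z) = last Z" "last (rev Z) = hd Z"
      using is_path_nonempty[OF Z(1)] by (simp_all add: hd_rev last_rev)
    ultimately show ?thesis
      using attachments_straddle[of "rev Z" j i i'] hd_att last_att by (auto simp: attachments_def)
  qed
  ultimately show False by simp
qed

lemma has_neighbourhood_path_last_one_attachment:
  assumes Z: "is_path outside E Z" and closed: "\<forall>y\<in>outside. E (last Z) y \<longrightarrow> y \<in> set Z"
    and att: "attachments (hd Z) \<noteq> {}" "a < length P1" "attachments (last Z) = {P1 ! a}"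
  shows "has_neighbourhood_path (last Z)"
proof -
  obtain i where "i < length P1" "E (hd Z) (P1 ! i)"
    using att(1) by (auto simp: attachments_def in_set_conv_nth)
  then show ?thesis
    using has_neighbourhood_path_last_via_P1[OF Z closed, of i a] att subpath_P1(5)[of i a a]
    by auto
qed

lemma end_of_closed_path_has_neighbourhood_path:
  assumes Z: "is_path outside E Z"
    and closed: "\<forall>y\<in>outside. E (hd Z) y \<longrightarrow> y \<in> set Z" "\<forall>y\<in>outside. E (last Z) y \<longrightarrow> y \<in> set Z"
  shows "has_neighbourhood_path (hd Z) \<or> has_neighbourhood_path (last Z)"
proof -
  have Z_ne: "Z \<noteq> []" using is_path_nonempty[OF Z] .
  have ends: "hd Z \<in> outside" "last Z \<in> outside" using is_path_hd_last_mem[OF Z] by auto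
  have rev_Z: "is_path outside E (rev Z)" "hd (rev Z) = last Z" "last (rev Z) = hd Z"
    "\<forall>y\<in>outside. E (last (rev Z)) y \<longrightarrow> y \<in> set (rev Z)"
    using Z Z_ne closed(1) by (simp_all add: is_path_rev symp_edge hd_rev last_rev)
  consider (hd_free) "attachments (hd Z) = {}" | (last_free) "attachments (last Z) = {}"
    | (both) "attachments (hd Z) \<noteq> {}" "attachments (last Z) \<noteq> {}"
    by blast
  then show ?thesis
  proof cases
    case hd_free
    then show ?thesis
      using has_neighbourhood_path_last_unattached[OF rev_Z(1,4)] rev_Z(2,3) by simp
  next
    case last_free
    then show ?thesis using has_neighbourhood_path_last_unattached[OF Z closed(2)] by simp
  next
    case both
    show ?thesis
    proof (cases rule: attachments_cases[OF ends(2)])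
      case (2 a)
      then show ?thesis
        using has_neighbourhood_path_last_one_attachment[OF Z closed(2) both(1)] by simp
    next
      case (3 j l)
      show ?thesis
      proof (cases rule: attachments_cases[OF ends(1)])
        case (2 a)
        then show ?thesis
          using has_neighbourhood_path_last_one_attachment[OF rev_Z(1,4), of a] rev_Z(2,3) both(2)
          by simp
      next
        case (3 i i')
        then have "\<not> 2 \<le> length Z"
          using not_two_attachments_at_both_ends[OF Z, of i i' j l] \<open>j < l\<close> \<open>l < length P1\<close>
            \<open>attachments (last Z) = {P1 ! j, P1 ! l}\<close> by blast
        then have "hd Z = last Z" using Z_ne by (cases Z) (auto simp: Suc_le_eq)
        then show ?thesis
          using has_neighbourhood_path_last_via_P1[OF Z closed(2), of i i'] 3
            subpath_P1(5)[of i i' i] subpath_P1(5)[of i i' i']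
          by (auto simp: attachments_def)
      qed (use both in simp)
    qed (use both in simp)
  qed
qed

lemma end_of_longest_outside_path_has_neighbourhood_path:
  assumes "longest_path outside E Z"
  shows "has_neighbourhood_path (hd Z) \<or> has_neighbourhood_path (last Z)"
  using end_of_closed_path_has_neighbourhood_path assms
    longest_path_hd_closed[OF assms] longest_path_last_closed[OF assms] edge_sym
  by (auto simp: longest_path_def)

lemma component_has_neighbourhood_path_vertex:
  assumes x: "x \<in> outside"
  shows "\<exists>w. reachable_in outside E x w \<and> has_neighbourhood_path w"
proof -
  define K where "K = {y. reachable_in outside E x y}"
  have K_outside: "K \<subseteq> outside"
    using reachable_in_mem[of outside E x] unfolding K_def by blast
  have "x \<in> K"
    using x unfolding K_def reachable_in_def by (auto intro!: exI[of _ "[x]"])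
  moreover have "finite K"
    using finite_vertices K_outside by (meson finite_Diff finite_subset)
  ultimately obtain Z where Z: "longest_path K E Z"
    using ex_longest_path[of K x E] by blast
  have K_closed: "y \<in> K" if "z \<in> K" "y \<in> outside" "E z y" for z y
    using that reachable_in_step[of outside E x z y] unfolding K_def by blast
  have Z_path: "is_path K E Z" using Z by (simp add: longest_path_def)
  have ends: "hd Z \<in> K" "last Z \<in> K" using is_path_hd_last_mem[OF Z_path] by auto
  have "has_neighbourhood_path (hd Z) \<or> has_neighbourhood_path (last Z)"
  proof (rule end_of_closed_path_has_neighbourhood_path)
    show "is_path outside E Z" using is_path_mono[OF Z_path K_outside] .
    show "\<forall>y\<in>outside. E (hd Z) y \<longrightarrow> y \<in> set Z"
      using K_closed[OF ends(1)] longest_path_hd_closed[OF Z] edge_sym by blast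
    show "\<forall>y\<in>outside. E (last Z) y \<longrightarrow> y \<in> set Z"
      using K_closed[OF ends(2)] longest_path_last_closed[OF Z] by blast
  qed
  then show ?thesis using ends unfolding K_def by blast
qed

lemma properties_of_outside_vertex_with_neighbourhood_path:
  assumes "connected_graph V E" "w \<in> outside" "has_neighbourhood_path w"
  shows "deg_in E V w \<le> 2 \<and> \<not> E (hd P1) w \<and> \<not> E (last P1) w \<and> \<not> cut_vertex V E w"
proof (intro conjI)
  show "deg_in E V w \<le> 2"
    using deg_le_2_if_has_neighbourhood_path assms(2,3) by simp
  show "\<not> E (hd P1) w"
    using longest_path_hd_closed[OF longest_P1, of w] assms(2) edge_sym by auto
  show "\<not> E (last P1) w"
    using longest_path_last_closed[OF longest_P1, of w] assms(2) by auto
  show "\<not> cut_vertex V E w"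
    using not_cut_vertex_if_has_neighbourhood_path assms(1,3) .
qed

end

section \<open>The second path\<close>

locale chordless_two_paths = chordless_longest_path +
  fixes P2 :: "'a list"
  assumes longest_P2: "longest_path outside E P2"
begin

lemma is_path_P2: "is_path outside E P2"
  using longest_P2 by (simp add: longest_path_def)

lemma P2_nonempty [simp]: "P2 \<noteq> []"
  using is_path_P2 by (simp add: is_path_def)

lemma distinct_P2: "distinct P2"
  using is_path_P2 by (simp add: is_path_def)

lemma set_P2_outside: "set P2 \<subseteq> outside"
  using is_path_P2 by (simp add: is_path_def)

lemma nth_P2_eq_iff: "a < length P2 \<Longrightarrow> b < length P2 \<Longrightarrow> P2 ! a = P2 ! b \<longleftrightarrow> a = b"
  using distinct_P2 by (simp add: nth_eq_iff_index_eq)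

lemma nth_P2_outside: "k < length P2 \<Longrightarrow> P2 ! k \<in> outside"
  using set_P2_outside nth_mem by blast

lemma edge_P2: "Suc k < length P2 \<Longrightarrow> E (P2 ! k) (P2 ! Suc k)"
  using is_path_P2 by (simp add: is_path_def)

lemma hd_P2: "hd P2 = P2 ! 0" and last_P2: "last P2 = P2 ! (length P2 - 1)"
  by (simp_all add: hd_conv_nth last_conv_nth)

lemma P2_unfold: "2 \<le> length P2 \<Longrightarrow> P2 = hd P2 # P2 ! 1 # drop 2 P2"
  using P2_nonempty by (cases P2; cases "tl P2") auto

lemma tl_P2:
  assumes "2 \<le> length P2"
  shows "tl P2 = P2 ! 1 # drop 2 P2" "is_path outside E (tl P2)"
    "hd (tl P2) = P2 ! 1" "last (tl P2) = last P2"
proof -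
  show tl_eq: "tl P2 = P2 ! 1 # drop 2 P2"
    using arg_cong[OF P2_unfold[OF assms], of tl] by simp
  show "is_path outside E (tl P2)" using is_path_tl[OF is_path_P2 assms] .
  show "hd (tl P2) = P2 ! 1" "last (tl P2) = last P2"
    using last_tl[of P2] by (simp_all add: tl_eq)
qed

lemma ex_neighbourhood_path_vertex_if_P2_short:
  assumes "length P2 \<le> 2" "outside \<noteq> set P2"
  shows "\<exists>w\<in>outside - {hd P2}. has_neighbourhood_path w"
proof -
  obtain x where x: "x \<in> outside" "x \<notin> set P2" using assms(2) set_P2_outside by blast
  then obtain w where w: "reachable_in outside E x w" "has_neighbourhood_path w"
    using component_has_neighbourhood_path_vertex by blast
  have P2_closed: "b \<in> set P2" if "a \<in> set P2" "b \<in> outside" "E a b" for a b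
  proof -
    have "a = hd P2 \<or> a = last P2"
      using that(1) assms(1) by (cases P2; cases "tl P2") auto
    then show ?thesis
      using that(2,3) longest_path_hd_closed[OF longest_P2, of b]
        longest_path_last_closed[OF longest_P2, of b] edge_sym by auto
  qed
  have "w \<noteq> hd P2"
  proof
    assume "w = hd P2"
    then have "reachable_in outside E (hd P2) x" using reachable_in_sym[OF symp_edge w(1)] by simp
    then show False
      using reachable_in_closed[of outside E "hd P2" x "set P2"] P2_closed x(2) by auto
  qed
  then show ?thesis using w reachable_in_mem[OF w(1)] by blast
qed

lemma ex_neighbourhood_path_vertex_if_hd_P2_unattached:
  assumes q: "3 \<le> length P2" and unattached: "attachments (hd P2) = {}"
    and deg: "deg_in E V (hd P2) \<noteq> 1"
  shows "\<exists>w\<in>outside - {hd P2}. has_neighbourhood_path w"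
proof -
  have "E (hd P2) (P2 ! 1)"
    using is_path_P2 q by (auto simp: is_path_def hd_P2)
  then have "P2 ! 1 \<in> {x \<in> V. E (hd P2) x}" using edge_mem by blast
  moreover have "{x \<in> V. E (hd P2) x} \<noteq> {P2 ! 1}" using deg by (auto simp: deg_in_def)
  ultimately obtain y where y: "E (hd P2) y" "y \<noteq> P2 ! 1" by blast
  have "y \<in> set P2"
    using y(1) unattached neighbour_cases longest_path_hd_closed[OF longest_P2, of y] edge_sym
    by blast
  then obtain k where k: "k < length P2" "P2 ! k = y" by (auto simp: in_set_conv_nth)
  have "k \<noteq> 0"
  proof
    assume "k = 0"
    with k y(1) show False using edge_irrefl by (simp add: hd_P2)
  qed
  moreover have "k \<noteq> 1" using k y(2) by auto
  ultimately have "1 < k" by simp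
  define Z where "Z = rev (take k P2) @ drop k P2"
  have "is_path outside E Z"
    unfolding Z_def using is_path_rotation[OF is_path_P2 symp_edge] k y(1) \<open>1 < k\<close> by simp
  then have "longest_path outside E Z"
    using longest_path_same_length[OF longest_P2] k unfolding Z_def by simp
  moreover have "hd Z = P2 ! (k - 1)"
    using k \<open>1 < k\<close> unfolding Z_def by (auto simp add: hd_append hd_rev last_conv_nth)
  moreover have "last Z = last P2"
    using k unfolding Z_def by simp
  moreover have "P2 ! (k - 1) \<in> outside - {hd P2}" "last P2 \<in> outside - {hd P2}"
    using k q \<open>1 < k\<close> nth_P2_outside nth_P2_eq_iff[of "k - 1" 0] nth_P2_eq_iff[of "length P2 - 1" 0]
    by (auto simp: hd_P2 last_P2)
  ultimately show ?thesis
    using end_of_longest_outside_path_has_neighbourhood_path by metis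
qed

lemma path_around_second_vertex:
  assumes q: "3 \<le> length P2"
    and t: "t < length P1" "E (last P2) (P1 ! t)" and i: "i < length P1" "E (hd P2) (P1 ! i)"
  defines "L \<equiv> drop 2 P2 @ subpath P1 t i @ [hd P2]"
  shows "is_path V E L" "P2 ! 2 \<in> set L" "hd P2 \<in> set L" "P2 ! 1 \<notin> set L" "hd L = P2 ! 2"
    and "y \<in> set L \<Longrightarrow> E (P2 ! 1) y \<Longrightarrow> y = hd P2 \<or> y = P2 ! 2"
proof -
  have D: "is_path outside E (drop 2 P2)" "hd (drop 2 P2) = P2 ! 2" "last (drop 2 P2) = last P2"
    "set (drop 2 P2) \<subseteq> outside"
    using q is_path_drop[OF is_path_P2, of 2] is_path_subset by (auto simp: hd_drop_conv_nth)
  have P2_eq: "P2 = hd P2 # P2 ! 1 # drop 2 P2"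
    using q by (intro P2_unfold) simp
  have distinct: "distinct (hd P2 # P2 ! 1 # drop 2 P2)"
    using distinct_P2 by (subst (asm) P2_eq)
  have ends_outside: "hd P2 \<in> outside" "P2 ! 1 \<in> outside"
    using nth_P2_outside[of 0] nth_P2_outside[of 1] q by (simp_all add: hd_P2)
  note A = subpath_P1[OF t(1) i(1)]
  have "is_path V E (drop 2 P2 @ subpath P1 t i)"
    using D is_path_outside A t(2) is_path_nonempty[OF D(1)] is_path_nonempty[OF A(1)]
    by (subst is_path_append) auto
  then show L: "is_path V E L"
    unfolding L_def using A D(4) distinct ends_outside i(2) edge_sym is_path_nonempty[OF A(1)]
    by (subst append_assoc[symmetric], subst is_path_append) auto
  show "P2 ! 2 \<in> set L" "hd P2 \<in> set L" "hd L = P2 ! 2"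
    unfolding L_def using D(2) hd_in_set[OF is_path_nonempty[OF D(1)]] by (auto simp: hd_append)
  show "P2 ! 1 \<notin> set L"
    unfolding L_def using A distinct ends_outside by auto
  have "E (P2 ! 1) (hd P2)" "E (P2 ! 1) (P2 ! 2)"
    using q edge_P2[of 0] edge_P2[of 1] edge_sym by (auto simp: hd_P2 numeral_2_eq_2)
  moreover have "hd P2 \<noteq> P2 ! 2"
    using nth_P2_eq_iff[of 0 2] q by (simp add: hd_P2)
  ultimately show "y = hd P2 \<or> y = P2 ! 2" if "y \<in> set L" "E (P2 ! 1) y"
    using no_three_neighbours_on_path[OF L _ \<open>P2 ! 1 \<notin> set L\<close>, of "hd P2" "P2 ! 2" y]
      that ends_outside \<open>P2 ! 2 \<in> set L\<close> \<open>hd P2 \<in> set L\<close> by auto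
qed

lemma neighbours_of_second_vertex:
  assumes q: "3 \<le> length P2" and i: "i < length P1" "E (hd P2) (P1 ! i)"
    and jl: "j < l" "l < length P1" "attachments (last P2) = {P1 ! j, P1 ! l}"
    and no_exit: "\<forall>z\<in>outside - set P2. \<not> E (P2 ! 1) z"
    and y: "E (P2 ! 1) y"
  shows "y = hd P2 \<or> y = P2 ! 2"
proof -
  have last_adj: "E (last P2) (P1 ! j)" "E (last P2) (P1 ! l)"
    using jl(3) by (auto simp: attachments_def)
  have j: "j < length P1" using jl by simp
  note around_j = path_around_second_vertex[OF q j last_adj(1) i]
  note around_l = path_around_second_vertex[OF q jl(2) last_adj(2) i]
  show ?thesis
  proof (cases rule: disjE[OF neighbour_cases[OF y]])
    assume "y \<in> outside"
    with no_exit y have "y \<in> set P2" by blast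
    then obtain k where k: "k < length P2" "y = P2 ! k"
      by (auto simp: in_set_conv_nth)
    consider "k = 0" | "k = 1" | "2 \<le> k" by linarith
    then show ?thesis
    proof cases
      case 2
      then show ?thesis using y k edge_irrefl by simp
    next
      case 3
      then obtain m where "k = m + 2" by (metis le_add_diff_inverse2)
      then have "y = drop 2 P2 ! m" "m < length (drop 2 P2)"
        using k by simp_all
      then have "y \<in> set (drop 2 P2)" by (metis nth_mem)
      then show ?thesis using around_j(6) y by auto
    qed (use k in \<open>simp add: hd_P2\<close>)
  next
    \<comment> \<open>an attachment of v2 lies strictly between u_j and u_l, by attachments_straddle for tl P2,
      hence on one of the two paths around v2\<close>
    assume "y \<in> attachments (P2 ! 1)"
    then obtain c where c: "c < length P1" "y = P1 ! c" "E (P2 ! 1) (P1 ! c)"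
      by (auto simp: attachments_def in_set_conv_nth)
    have "j < c \<and> c < l" "j < i \<and> i < l"
      using attachments_straddle[OF tl_P2(2) _ c(1) _ jl(1,2)]
        attachments_straddle[OF is_path_P2 _ i jl(1,2)] tl_P2(1,3,4) c(3) last_adj q
      by simp_all
    then have "y \<in> set (subpath P1 j i) \<or> y \<in> set (subpath P1 l i)"
      using subpath_P1(5)[OF j i(1), of c] subpath_P1(5)[OF jl(2) i(1), of c] c(2)
      by (cases "c \<le> i") auto
    moreover have "hd P2 \<in> outside" "P2 ! 2 \<in> outside"
      using nth_P2_outside[of 0] nth_P2_outside[of 2] q by (simp_all add: hd_P2)
    ultimately have "y \<in> outside"
      using around_j(6) around_l(6) y unfolding append_assoc by auto
    then show ?thesis using c(1,2) by auto
  qed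
qed

lemma ex_neighbourhood_path_vertex_if_last_P2_two_attachments:
  assumes q: "3 \<le> length P2" and i: "i < length P1" "E (hd P2) (P1 ! i)"
    and jl: "j < l" "l < length P1" "attachments (last P2) = {P1 ! j, P1 ! l}"
  shows "\<exists>w\<in>outside - {hd P2}. has_neighbourhood_path w"
proof -
  have v2: "P2 ! 1 \<in> outside - {hd P2}"
    using q nth_P2_outside[of 1] nth_P2_eq_iff[of 1 0] by (simp add: hd_P2)
  show ?thesis
  proof (cases "\<exists>z\<in>outside - set P2. E (P2 ! 1) z")
    case True
    then obtain z where z: "z \<in> outside" "z \<notin> set P2" "E (P2 ! 1) z" by blast
    have "z \<in> outside - {hd P2}" "z \<notin> set (tl P2)"
      using z(1,2) hd_in_set[OF P2_nonempty] list.set_sel(2)[OF P2_nonempty] by auto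
    then have "is_path outside E (z # tl P2)"
      using z tl_P2(2,3) q edge_sym by (auto simp: is_path_Cons)
    then have "longest_path outside E (z # tl P2)"
      using longest_path_same_length[OF longest_P2] by simp
    then have "has_neighbourhood_path z \<or> has_neighbourhood_path (last P2)"
      using end_of_longest_outside_path_has_neighbourhood_path[of "z # tl P2"] tl_P2(1,4) q
      by simp
    moreover have "last P2 \<in> outside - {hd P2}"
      using q nth_P2_outside nth_P2_eq_iff[of "length P2 - 1" 0] by (simp add: hd_P2 last_P2)
    ultimately show ?thesis using \<open>z \<in> outside - {hd P2}\<close> by blast
  next
    case False
    let ?L = "drop 2 P2 @ subpath P1 j i @ [hd P2]"
    have "j < length P1" "E (last P2) (P1 ! j)" using jl(1,2,3) by (auto simp: attachments_def)
    note around_j = path_around_second_vertex[OF q this i]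
    have "P2 ! 1 \<in> V" "E (P2 ! 1) (P2 ! 2)"
      using v2 edge_P2[of 1] q by (simp_all add: numeral_2_eq_2)
    then have "is_path V E (P2 ! 1 # ?L)"
      using around_j(1,4,5) by (simp add: is_path_Cons)
    moreover have "\<forall>y. E (P2 ! 1) y \<longrightarrow> y \<in> set (P2 ! 1 # ?L)"
      using neighbours_of_second_vertex[OF q i jl] False around_j(2,3) by auto
    ultimately have "has_neighbourhood_path (P2 ! 1)"
      unfolding has_neighbourhood_path_def by (metis list.sel(1))
    with v2 show ?thesis by blast
  qed
qed

lemma ex_neighbourhood_path_vertex_if_P2_long:
  assumes q: "3 \<le> length P2" and deg: "deg_in E V (hd P2) \<noteq> 1"
  shows "\<exists>w\<in>outside - {hd P2}. has_neighbourhood_path w"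
proof -
  have last_P2_outside: "last P2 \<in> outside - {hd P2}"
    using q nth_P2_outside nth_P2_eq_iff[of "length P2 - 1" 0] by (simp add: hd_P2 last_P2)
  have closed: "\<forall>y\<in>outside. E (last P2) y \<longrightarrow> y \<in> set P2"
    using longest_path_last_closed[OF longest_P2] by blast
  show ?thesis
  proof (cases "attachments (hd P2) = {}")
    case True
    then show ?thesis using ex_neighbourhood_path_vertex_if_hd_P2_unattached q deg by blast
  next
    case False
    then obtain i where i: "i < length P1" "E (hd P2) (P1 ! i)"
      by (auto simp: attachments_def in_set_conv_nth)
    have "last P2 \<in> outside" using last_P2_outside by blast
    then show ?thesis
    proof (cases rule: attachments_cases)
      case 1
      then have "has_neighbourhood_path (last P2)"
        by (rule has_neighbourhood_path_last_unattached[OF is_path_P2 closed])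
      then show ?thesis using last_P2_outside by blast
    next
      case (2 a)
      then have "has_neighbourhood_path (last P2)"
        using has_neighbourhood_path_last_one_attachment[OF is_path_P2 closed False] by simp
      then show ?thesis using last_P2_outside by blast
    next
      case (3 j l)
      then show ?thesis
        using ex_neighbourhood_path_vertex_if_last_P2_two_attachments[OF q i] by blast
    qed
  qed
qed

end

theorem lemma2p4:
  fixes V :: "'a set" and E :: "'a \<Rightarrow> 'a \<Rightarrow> bool" and P1 P2 :: "'a list"
  assumes "simple_graph V E"
    and "connected_graph V E"
    and "card V \<ge> 4"
    and "\<not> has_chorded_cycle V E"
    and "\<not> (\<exists>xs. hamiltonian_path V E xs)"
    and "longest_path V E P1" and "length P1 \<ge> 3"
    and "longest_path (V - set P1) E P2" and "length P2 \<ge> 1"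
    and "deg_in E (set P1) (hd P2) \<le> deg_in E (set P1) (last P2)"
  shows "(length P2 \<le> 2 \<and> V = set P1 \<union> set P2)
      \<or> (length P2 \<ge> 3 \<and> deg_in E V (hd P2) = 1)
      \<or> (\<exists>w \<in> V - (set P1 \<union> {hd P2}). deg_in E V w \<le> 2 \<and> \<not> E (hd P1) w
            \<and> \<not> E (last P1) w \<and> \<not> cut_vertex V E w)"
proof -
  interpret chordless_two_paths V E P1 P2
    using assms(1,4,6,8) by unfold_locales
  have via_neighbourhood_path: ?thesis if "\<exists>w\<in>outside - {hd P2}. has_neighbourhood_path w"
    using that properties_of_outside_vertex_with_neighbourhood_path[OF assms(2)]
    by (auto simp flip: Diff_insert2 insert_is_Un)
  have "set P1 \<subseteq> V" using is_path_subset[OF is_path_P1] .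
  then consider "length P2 \<le> 2" "V = set P1 \<union> set P2" | "length P2 \<le> 2" "outside \<noteq> set P2"
    | "3 \<le> length P2" "deg_in E V (hd P2) = 1" | "3 \<le> length P2" "deg_in E V (hd P2) \<noteq> 1"
    using set_P2_outside by fastforce
  then show ?thesis
  proof cases
    case 2
    then show ?thesis using ex_neighbourhood_path_vertex_if_P2_short via_neighbourhood_path by blast
  next
    case 4
    then show ?thesis using ex_neighbourhood_path_vertex_if_P2_long via_neighbourhood_path by blast
  qed blast+
qed

end
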